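(* Let $(X,d_X)$ be a metric space and let $r,R\in(0,\infty)$. (i) $\Delta_X^{(c)}$ and $\Delta_X^{(u)}$ are non-decreasing functions. (ii) If $\Delta_X^{(c)}(R)<\infty$, then $\Delta_X^{(u)}(\Delta_X^{(c)}(R)+\varepsilon)\geq R$ for all $\varepsilon>0$. (iii) If $\Delta_X^{(u)}(r)>0$, then $\Delta_X^{(c)}(\Delta_X^{(u)}(r)-\varepsilon)\leq r$ for all $0<\varepsilon<\Delta_X^{(u)}(r)$. (iv) $\Delta_X^{(u)}(s)>0$ for all $s>0$ if and only if $\lim_{R\to0}\Delta_X^{(c)}(R)=0$. (v) $\Delta_X^{(c)}(s)<\infty$ for all $s\in[0,\infty)$ if and only if $\lim_{r\to\infty}\Delta_X^{(u)}(r)=\infty$.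
   Context: For a cover $\mathcal{U}$ of $X$: $\mathrm{diam}(\mathcal{U})=\sup_{U\in\mathcal{U}}\mathrm{diam}(U)$; $\mathcal{L}(\mathcal{U})=\sup\{d\in[0,\infty): \text{every } E\subseteq X \text{ with } \mathrm{diam}(E)<d \text{ is contained in some } U\in\mathcal{U}\}$; point-finite means each point lies in only finitely many members. $\Delta_X^{(u)},\Delta_X^{(c)}\colon[0,\infty)\to[0,\infty]$ are $\Delta_X^{(u)}(r)=\sup\{\mathcal{L}(\mathcal{U}): \mathcal{U} \text{ point-finite cover of } X,\ \mathrm{diam}(\mathcal{U})\leq r\}$ and $\Delta_X^{(c)}(R)=\inf\{\mathrm{diam}(\mathcal{U}): \mathcal{U} \text{ point-finite cover of } X,\ \mathcal{L}(\mathcal{U})\geq R\}$. (The condition in (iv) is the uniform Stone property and in (v) the coarse Stone property.) *)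

theory Defs
  imports "HOL-Analysis.Analysis" "HOL-Library.Extended_Real"
begin

text \<open>Diameter with values in [0,\<infinity>]; the empty set has diameter 0.\<close>
definition ediam :: "'a::metric_space set \<Rightarrow> ereal" where
  "ediam E = sup 0 (SUP p\<in>E \<times> E. ereal (dist (fst p) (snd p)))"

definition cover_diam :: "'a::metric_space set set \<Rightarrow> ereal" where
  "cover_diam \<U> = sup 0 (SUP U\<in>\<U>. ediam U)"

definition is_cover :: "'a set \<Rightarrow> 'a set set \<Rightarrow> bool" where
  "is_cover X \<U> \<longleftrightarrow> (\<forall>U\<in>\<U>. U \<subseteq> X) \<and> \<Union>\<U> = X"

definition point_finite :: "'a set \<Rightarrow> 'a set set \<Rightarrow> bool" where
  "point_finite X \<U> \<longleftrightarrow> (\<forall>x\<in>X. finite {U\<in>\<U>. x \<in> U})"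

definition lebesgue_num :: "'a::metric_space set \<Rightarrow> 'a set set \<Rightarrow> ereal" where
  "lebesgue_num X \<U> = (SUP d\<in>{d::real. 0 \<le> d \<and>
      (\<forall>E. E \<subseteq> X \<and> ediam E < ereal d \<longrightarrow> (\<exists>U\<in>\<U>. E \<subseteq> U))}. ereal d)"

definition Delta_u :: "'a::metric_space set \<Rightarrow> ereal \<Rightarrow> ereal" where
  "Delta_u X r = (SUP \<U>\<in>{\<U>. is_cover X \<U> \<and> point_finite X \<U> \<and> cover_diam \<U> \<le> r}.
      lebesgue_num X \<U>)"

definition Delta_c :: "'a::metric_space set \<Rightarrow> ereal \<Rightarrow> ereal" where
  "Delta_c X R = (INF \<U>\<in>{\<U>. is_cover X \<U> \<and> point_finite X \<U> \<and> lebesgue_num X \<U> \<ge> R}.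
      cover_diam \<U>)"

end

theory Submission
  imports Defs
begin

text \<open>All five items come from the two elementary comparisons
  \<open>lebesgue_num X \<U> \<le> \<Delta>\<^sub>u(cover_diam \<U>)\<close> and \<open>\<Delta>\<^sub>c(lebesgue_num X \<U>) \<le> cover_diam \<U>\<close>,
  valid for every point-finite cover \<open>\<U>\<close>, together with covers almost attaining the
  supremum and infimum in the definitions. The only extra ingredient is the degenerate
  case \<open>\<Delta>\<^sub>u(r) = \<infinity>\<close>: then \<open>X\<close> has diameter at most \<open>r\<close> and the trivial cover \<open>{X}\<close>,
  whose Lebesgue number is infinite, witnesses \<open>\<Delta>\<^sub>c \<le> r\<close>.\<close>

lemma dist_le_ediam: "x \<in> E \<Longrightarrow> y \<in> E \<Longrightarrow> ereal (dist x y) \<le> ediam E"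
  unfolding ediam_def
  by (rule order_trans[OF _ sup_ge2], rule SUP_upper2[of "(x, y)"]) auto

lemma ediam_le:
  "(\<And>x y. x \<in> E \<Longrightarrow> y \<in> E \<Longrightarrow> dist x y \<le> r) \<Longrightarrow> 0 \<le> r \<Longrightarrow> ediam E \<le> ereal r"
  unfolding ediam_def by (auto intro!: SUP_least)

lemma cover_diam_nonneg: "0 \<le> cover_diam \<U>"
  unfolding cover_diam_def by simp

lemma ediam_le_cover_diam: "U \<in> \<U> \<Longrightarrow> ediam U \<le> cover_diam \<U>"
  unfolding cover_diam_def
  by (rule order_trans[OF _ sup_ge2], rule SUP_upper) auto

lemma lebesgue_num_trivial_cover: "lebesgue_num X {X} = \<infinity>"
proof (rule ereal_top)
  fix B :: real
  have "ereal (max 0 B) \<le> lebesgue_num X {X}"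
    unfolding lebesgue_num_def by (rule SUP_upper) auto
  then show "ereal B \<le> lebesgue_num X {X}"
    by (rule order_trans[rotated]) simp
qed

lemma Delta_c_nonneg: "0 \<le> Delta_c X R"
  unfolding Delta_c_def by (rule INF_greatest) (simp add: cover_diam_nonneg)

lemma Delta_c_le_cover_diam:
  assumes "is_cover X \<U>" "point_finite X \<U>" "R \<le> lebesgue_num X \<U>"
  shows "Delta_c X R \<le> cover_diam \<U>"
  unfolding Delta_c_def by (rule INF_lower) (use assms in auto)

lemma lebesgue_num_le_Delta_u:
  assumes "is_cover X \<U>" "point_finite X \<U>" "cover_diam \<U> \<le> r"
  shows "lebesgue_num X \<U> \<le> Delta_u X r"
  unfolding Delta_u_def by (rule SUP_upper) (use assms in auto)

lemma Delta_c_lessE: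
  assumes "Delta_c X R < c"
  obtains \<U> where "is_cover X \<U>" "point_finite X \<U>" "R \<le> lebesgue_num X \<U>" "cover_diam \<U> < c"
  using assms unfolding Delta_c_def INF_less_iff by auto

lemma Delta_u_greaterE:
  assumes "c < Delta_u X r"
  obtains \<U> where "is_cover X \<U>" "point_finite X \<U>" "cover_diam \<U> \<le> r" "c < lebesgue_num X \<U>"
  using assms unfolding Delta_u_def less_SUP_iff by auto

lemma Delta_c_le_bounded_diam:
  assumes "\<And>x y. x \<in> X \<Longrightarrow> y \<in> X \<Longrightarrow> dist x y \<le> r" "0 \<le> r"
  shows "Delta_c X R \<le> ereal r"
proof -
  have "Delta_c X R \<le> cover_diam {X}"
    by (rule Delta_c_le_cover_diam)
       (auto simp: is_cover_def point_finite_def lebesgue_num_trivial_cover)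
  also have "\<dots> \<le> ereal r"
    unfolding cover_diam_def using ediam_le[OF assms] assms(2) by auto
  finally show ?thesis .
qed

lemma dist_le_if_Delta_u_infinite:
  assumes "Delta_u X (ereal r) = \<infinity>" "x \<in> X" "y \<in> X"
  shows "dist x y \<le> r"
proof -
  obtain \<U> where \<U>: "is_cover X \<U>" "point_finite X \<U>" "cover_diam \<U> \<le> ereal r"
      "ereal (dist x y) < lebesgue_num X \<U>"
    using Delta_u_greaterE[of "ereal (dist x y)" X "ereal r"] assms(1) by auto
  then obtain d where d: "\<forall>E. E \<subseteq> X \<and> ediam E < ereal d \<longrightarrow> (\<exists>U\<in>\<U>. E \<subseteq> U)" "dist x y < d"
    unfolding lebesgue_num_def less_SUP_iff by auto
  have "ediam {x, y} \<le> ereal (dist x y)"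
    by (rule ediam_le) (auto simp: dist_commute)
  also have "\<dots> < ereal d" using d(2) by simp
  finally obtain U where U: "U \<in> \<U>" "{x, y} \<subseteq> U"
    using d(1)[rule_format, of "{x, y}"] assms(2,3) by auto
  have "ereal (dist x y) \<le> ediam U" using U by (intro dist_le_ediam) auto
  also have "\<dots> \<le> cover_diam \<U>" by (rule ediam_le_cover_diam[OF U(1)])
  also have "\<dots> \<le> ereal r" by fact
  finally show ?thesis by simp
qed

lemma mono_Delta_c: "mono (Delta_c X)"
  unfolding Delta_c_def by (rule monoI, rule INF_superset_mono) (auto dest: order_trans)

lemma mono_Delta_u: "mono (Delta_u X)"
  unfolding Delta_u_def by (rule monoI, rule SUP_subset_mono) (auto dest: order_trans)

lemma Delta_u_Delta_c_add_ge:
  assumes "Delta_c X R < \<infinity>" "0 < e"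
  shows "R \<le> Delta_u X (Delta_c X R + ereal e)"
proof -
  have "Delta_c X R < Delta_c X R + ereal e"
    using assms Delta_c_nonneg[of X R] by (cases "Delta_c X R") auto
  then obtain \<U> where \<U>: "is_cover X \<U>" "point_finite X \<U>" "R \<le> lebesgue_num X \<U>"
      "cover_diam \<U> < Delta_c X R + ereal e"
    by (rule Delta_c_lessE)
  note \<open>R \<le> lebesgue_num X \<U>\<close>
  also have "lebesgue_num X \<U> \<le> Delta_u X (Delta_c X R + ereal e)"
    using \<U> by (intro lebesgue_num_le_Delta_u) auto
  finally show ?thesis .
qed

lemma Delta_c_Delta_u_diff_le:
  assumes "0 \<le> r" "0 < e" "ereal e < Delta_u X (ereal r)"
  shows "Delta_c X (Delta_u X (ereal r) - ereal e) \<le> ereal r"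
proof (cases "Delta_u X (ereal r) = \<infinity>")
  case True
  then show ?thesis
    using dist_le_if_Delta_u_infinite assms(1) by (intro Delta_c_le_bounded_diam)
next
  case False
  then have "Delta_u X (ereal r) - ereal e < Delta_u X (ereal r)"
    using assms(2,3) by (cases "Delta_u X (ereal r)") auto
  then obtain \<U> where \<U>: "is_cover X \<U>" "point_finite X \<U>" "cover_diam \<U> \<le> ereal r"
      "Delta_u X (ereal r) - ereal e < lebesgue_num X \<U>"
    by (rule Delta_u_greaterE)
  have "Delta_c X (Delta_u X (ereal r) - ereal e) \<le> cover_diam \<U>"
    using \<U> by (intro Delta_c_le_cover_diam) auto
  with \<U>(3) show ?thesis by simp
qed

lemma uniform_Stone_iff:
  "(\<forall>s::real. 0 < s \<longrightarrow> 0 < Delta_u X (ereal s))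
    \<longleftrightarrow> ((\<lambda>s. Delta_c X (ereal s)) \<longlongrightarrow> 0) (at_right 0)"
proof
  assume pos: "\<forall>s::real. 0 < s \<longrightarrow> 0 < Delta_u X (ereal s)"
  show "((\<lambda>s. Delta_c X (ereal s)) \<longlongrightarrow> 0) (at_right 0)"
  proof (rule order_tendstoI)
    fix a :: ereal assume "a < 0"
    then show "\<forall>\<^sub>F s in at_right 0. a < Delta_c X (ereal s)"
      using Delta_c_nonneg[of X] by (intro always_eventually allI) (blast intro: less_le_trans)
  next
    fix a :: ereal assume "0 < a"
    then obtain \<eta> where \<eta>: "0 < ereal \<eta>" "ereal \<eta> < a" using ereal_dense2 by blast
    then obtain \<delta> where \<delta>: "0 < ereal \<delta>" "ereal \<delta> < Delta_u X (ereal \<eta>)"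
      using pos ereal_dense2 by (metis less_ereal.simps(1) zero_ereal_def)
    obtain \<U> where \<U>: "is_cover X \<U>" "point_finite X \<U>" "cover_diam \<U> \<le> ereal \<eta>"
        "ereal \<delta> < lebesgue_num X \<U>"
      using \<delta>(2) by (rule Delta_u_greaterE)
    have "Delta_c X (ereal s) < a" if "s < \<delta>" for s :: real
    proof -
      have "Delta_c X (ereal s) \<le> cover_diam \<U>"
        using \<U> that by (intro Delta_c_le_cover_diam) (auto intro: order_trans[of _ "ereal \<delta>"])
      with \<U>(3) \<eta>(2) show ?thesis by simp
    qed
    then show "\<forall>\<^sub>F s in at_right 0. Delta_c X (ereal s) < a"
      using \<delta>(1) by (subst eventually_at_right[of 0 \<delta>]) auto
  qed
next
  assume lim: "((\<lambda>s. Delta_c X (ereal s)) \<longlongrightarrow> 0) (at_right 0)"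
  show "\<forall>s::real. 0 < s \<longrightarrow> 0 < Delta_u X (ereal s)"
  proof (intro allI impI)
    fix s :: real assume "0 < s"
    then have "\<forall>\<^sub>F t in at_right 0. Delta_c X (ereal t) < ereal s"
      using order_tendstoD(2)[OF lim] by simp
    then obtain t where "0 < t" "Delta_c X (ereal t) < ereal s"
      by (auto simp: eventually_at_right[of 0 1] dest: dense)
    then obtain \<U> where \<U>: "is_cover X \<U>" "point_finite X \<U>" "ereal t \<le> lebesgue_num X \<U>"
        "cover_diam \<U> < ereal s"
      by (auto elim: Delta_c_lessE)
    have "0 < ereal t" using \<open>0 < t\<close> by simp
    also have "\<dots> \<le> lebesgue_num X \<U>" by fact
    also have "\<dots> \<le> Delta_u X (ereal s)" using \<U> by (intro lebesgue_num_le_Delta_u) auto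
    finally show "0 < Delta_u X (ereal s)" .
  qed
qed

lemma coarse_Stone_iff:
  "(\<forall>s::real. 0 \<le> s \<longrightarrow> Delta_c X (ereal s) < \<infinity>)
    \<longleftrightarrow> ((\<lambda>s. Delta_u X (ereal s)) \<longlongrightarrow> \<infinity>) at_top"
proof
  assume fin: "\<forall>s::real. 0 \<le> s \<longrightarrow> Delta_c X (ereal s) < \<infinity>"
  show "((\<lambda>s. Delta_u X (ereal s)) \<longlongrightarrow> \<infinity>) at_top"
    unfolding tendsto_PInfty
  proof
    fix M :: real
    obtain z where "Delta_c X (ereal (max 0 (M + 1))) < ereal z"
      using fin ereal_dense2 by (metis max.cobounded1)
    then obtain \<U> where \<U>: "is_cover X \<U>" "point_finite X \<U>"
        "ereal (max 0 (M + 1)) \<le> lebesgue_num X \<U>" "cover_diam \<U> < ereal z"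
      by (rule Delta_c_lessE)
    have "ereal M < Delta_u X (ereal s)" if "z \<le> s" for s
    proof -
      have "M < max 0 (M + 1)" by linarith
      then have "ereal M < ereal (max 0 (M + 1))" by (simp only: less_ereal.simps)
      also have "\<dots> \<le> lebesgue_num X \<U>" by fact
      also have "\<dots> \<le> Delta_u X (ereal s)"
        using \<U> that by (intro lebesgue_num_le_Delta_u) (auto intro: order_trans[of _ "ereal z"])
      finally show ?thesis .
    qed
    then show "\<forall>\<^sub>F s in at_top. ereal M < Delta_u X (ereal s)"
      unfolding eventually_at_top_linorder by blast
  qed
next
  assume lim: "((\<lambda>s. Delta_u X (ereal s)) \<longlongrightarrow> \<infinity>) at_top"
  show "\<forall>s::real. 0 \<le> s \<longrightarrow> Delta_c X (ereal s) < \<infinity>"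
  proof (intro allI impI)
    fix s :: real
    obtain N where "ereal s < Delta_u X (ereal N)"
      using lim unfolding tendsto_PInfty eventually_at_top_linorder by blast
    then obtain \<U> where \<U>: "is_cover X \<U>" "point_finite X \<U>" "cover_diam \<U> \<le> ereal N"
        "ereal s < lebesgue_num X \<U>"
      by (rule Delta_u_greaterE)
    have "Delta_c X (ereal s) \<le> cover_diam \<U>" using \<U> by (intro Delta_c_le_cover_diam) auto
    also have "\<dots> < \<infinity>" using \<U>(3) by auto
    finally show "Delta_c X (ereal s) < \<infinity>" .
  qed
qed

theorem lemma3p4:
  fixes X :: "'a::metric_space set" and r R :: real
  assumes "0 < r" and "0 < R"
  shows "mono_on {0::real..} (\<lambda>s. Delta_c X (ereal s))
       \<and> mono_on {0::real..} (\<lambda>s. Delta_u X (ereal s))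
       \<and> (Delta_c X (ereal R) < \<infinity> \<longrightarrow>
            (\<forall>\<epsilon>::real. 0 < \<epsilon> \<longrightarrow> Delta_u X (Delta_c X (ereal R) + ereal \<epsilon>) \<ge> ereal R))
       \<and> (Delta_u X (ereal r) > 0 \<longrightarrow>
            (\<forall>\<epsilon>::real. 0 < \<epsilon> \<and> ereal \<epsilon> < Delta_u X (ereal r) \<longrightarrow>
                Delta_c X (Delta_u X (ereal r) - ereal \<epsilon>) \<le> ereal r))
       \<and> ((\<forall>s::real. 0 < s \<longrightarrow> Delta_u X (ereal s) > 0) \<longleftrightarrow>
            ((\<lambda>s. Delta_c X (ereal s)) \<longlongrightarrow> 0) (at_right 0))
       \<and> ((\<forall>s::real. 0 \<le> s \<longrightarrow> Delta_c X (ereal s) < \<infinity>) \<longleftrightarrow>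
            ((\<lambda>s. Delta_u X (ereal s)) \<longlongrightarrow> \<infinity>) at_top)"
proof (intro conjI impI allI)
  show "mono_on {0::real..} (\<lambda>s. Delta_c X (ereal s))"
    by (rule mono_onI) (simp add: monoD[OF mono_Delta_c])
  show "mono_on {0::real..} (\<lambda>s. Delta_u X (ereal s))"
    by (rule mono_onI) (simp add: monoD[OF mono_Delta_u])
  show "Delta_u X (Delta_c X (ereal R) + ereal e) \<ge> ereal R"
    if "Delta_c X (ereal R) < \<infinity>" "0 < e" for e
    using that by (rule Delta_u_Delta_c_add_ge)
  show "Delta_c X (Delta_u X (ereal r) - ereal e) \<le> ereal r"
    if "0 < e \<and> ereal e < Delta_u X (ereal r)" for e
    using that assms(1) by (intro Delta_c_Delta_u_diff_le) auto
qed (fact uniform_Stone_iff coarse_Stone_iff)+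

end
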